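(* Let $n$ be a positive integer such that $n$ is odd and $n\not\equiv 1 \pmod 3$. Then the $n$-th Catalan number $C_n=\frac{1}{n+1}\binom{2n}{n}$ is divisible by $n+2$.
   Context: The Catalan numbers are $C_n=\frac{1}{n+1}\binom{2n}{n}=\frac{(2n)!}{(n+1)!\,n!}$ for $n\ge 0$. *)

theory Defs
  imports Main
begin

text \<open>The n-th Catalan number C_n = (2n choose n)/(n+1); the division is exact.\<close>
definition catalan :: "nat \<Rightarrow> nat" where
  "catalan n = ((2 * n) choose n) div (n + 1)"

end

theory Submission
  imports Defs "HOL-Computational_Algebra.Primes"
begin

text \<open>The Catalan numbers satisfy \<open>(n + 2) C(n + 1) = 2 (2n + 1) C(n)\<close>, so \<open>n + 2\<close> divides
  \<open>2 (2n + 1) C(n)\<close>. For odd \<open>n\<close> the factor \<open>n + 2\<close> is odd, and every common divisor of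
  \<open>n + 2\<close> and \<open>2n + 1 = 2(n + 2) - 3\<close> divides \<open>3\<close>. Since \<open>n mod 3 \<noteq> 1\<close> means that \<open>3\<close>
  does not divide \<open>n + 2\<close>, both factors are coprime to \<open>n + 2\<close>, which therefore divides \<open>C(n)\<close>.\<close>

lemma Suc_times_central_binomial_Suc: "Suc n * (2 * n choose Suc n) = n * (2 * n choose n)"
proof (cases n)
  case (Suc m)
  then have "Suc (n + m) = 2 * n"
    by simp
  then show ?thesis
    using Suc_times_binomial_add[of n m] \<open>n = Suc m\<close> by metis
qed simp

lemma Suc_dvd_central_binomial: "Suc n dvd (2 * n choose n)"
proof -
  have "Suc n dvd n * (2 * n choose n)"
    by (metis Suc_times_central_binomial_Suc dvd_triv_left)
  moreover have "coprime (Suc n) n"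
    by simp
  ultimately show ?thesis
    using coprime_dvd_mult_right_iff by blast
qed

lemma catalan_times_Suc: "catalan n * Suc n = 2 * n choose n"
  unfolding catalan_def using Suc_dvd_central_binomial by (metis Suc_eq_plus1 dvd_div_mult_self)

lemma catalan_Suc: "(n + 2) * catalan (Suc n) = 2 * (2 * n + 1) * catalan n"
proof -
  have "Suc n * ((n + 2) * catalan (Suc n)) = Suc n * (2 * Suc n choose Suc n)"
    using catalan_times_Suc[of "Suc n"] by (metis add_2_eq_Suc' mult.commute)
  also have "\<dots> = 2 * Suc n * (Suc (2 * n) choose n)"
    using Suc_times_binomial[of n "Suc (2 * n)"] by simp
  also have "\<dots> = 2 * Suc n * (Suc (2 * n) choose Suc n)"
    using binomial_symmetric[of n "Suc (2 * n)"] by simp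
  also have "\<dots> = 2 * Suc (2 * n) * (2 * n choose n)"
    using Suc_times_binomial_eq[of "2 * n" n] by (metis mult.assoc mult.commute)
  also have "\<dots> = Suc n * (2 * (2 * n + 1) * catalan n)"
    unfolding catalan_times_Suc[symmetric] by (simp add: algebra_simps)
  finally show ?thesis
    by (rule mult_left_cancel[THEN iffD1, rotated]) simp
qed

lemma coprime_add_2_Suc_double:
  fixes n :: nat
  assumes "\<not> 3 dvd n + 2"
  shows "coprime (n + 2) (2 * n + 1)"
proof (rule coprimeI)
  fix d
  assume d: "d dvd n + 2" "d dvd 2 * n + 1"
  then have "d dvd 2 * (n + 2) - (2 * n + 1)"
    by (intro dvd_diff_nat dvd_mult)
  then have "d dvd 3"
    by simp
  moreover have "coprime (n + 2) 3"
    using assms prime_imp_coprime[of "3 :: nat" "n + 2"] by (simp add: coprime_commute)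
  ultimately show "is_unit d"
    using d(1) coprime_common_divisor by blast
qed

theorem theorem2p1:
  fixes n :: nat
  assumes "n > 0" and "odd n" and "n mod 3 \<noteq> 1"
  shows "(n + 2) dvd catalan n"
proof -
  have "(n + 2) dvd 2 * (2 * n + 1) * catalan n"
    by (metis catalan_Suc dvd_triv_left)
  moreover have "coprime (n + 2) 2"
    using \<open>odd n\<close> by simp
  moreover have "coprime (n + 2) (2 * n + 1)"
    using \<open>n mod 3 \<noteq> 1\<close> by (intro coprime_add_2_Suc_double) presburger
  ultimately show ?thesis
    by (metis coprime_dvd_mult_right_iff coprime_mult_right_iff)
qed

end
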